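(* Let $\mathbf M$ be an $(N+1,k)$-admissible and micro-reversible matrix, with $Q$-process kernel $\mathbf K$ and stationary measure $\boldsymbol\pi$ (indices $i=0,\dots,N-k$). Let $\phi:\mathbb R^+\to\mathbb R$ be differentiable and convex, let $G_\phi(\mathbf Q|\boldsymbol\pi):=\sum_{i=0}^{N-k}\phi(Q_i)\pi_i$, and let $\mathbf Q(t)=\mathbf q(t)/\boldsymbol\pi$, with $\mathbf q(t)$ a probability vector, solve $\frac{d\mathbf Q}{dt}=(\mathbf K-\mathbf I)\mathbf Q$. Then $$\frac{d}{dt}G_\phi(\mathbf Q|\boldsymbol\pi)=-\frac12\sum_{i,j=0}^{N-k}K_{ij}\,\beta(Q_i,Q_j)\big(\phi'(Q_j)-\phi'(Q_i)\big)\big(\log Q_j-\log Q_i\big)\pi_i\le0.$$ Moreover, if $\phi$ is locally strongly convex in the sense that for every $M>0$ there is $c_M>0$ with $\phi''(x)\ge c_M$ for $x\in[0,M]$, then there exists $C>0$ depending only on $\phi$ and $\boldsymbol\pi$ such that $$\frac{d}{dt}G_\phi(\mathbf Q|\boldsymbol\pi)\le-C\Big|\frac{d\mathbf Q}{dt}\Big|_{\boldsymbol\pi}^2\le0,\qquad |\mathbf a|_{\boldsymbol\pi}^2:=\sum_ia_i^2\pi_i.$$ Furthermore, if $\phi(x)\ge x-1$ for all $x\ge0$, then $G_\phi(\mathbf Q|\boldsymbol\pi)\ge0$.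
   Context: Column-stochastic matrices; $\dagger$ transpose, $\circ$ entrywise product. For $1\le k<N-1$, an $(N+1)\times(N+1)$ column-stochastic $\mathbf M$ is $(N+1,k)$-admissible if, after a simultaneous permutation of rows and columns, $\mathbf M=\begin{pmatrix}\widetilde{\mathbf M}&\mathbf 0\\ \mathbf A&\mathbf I\end{pmatrix}$ with $\mathbf I$ the $k\times k$ identity, $\widetilde{\mathbf M}$ irreducible of size $N+1-k$ (the core) and $\mathbf A$ with no zero row. Its characteristic triple $(\mu,\widetilde{\mathbf w},\widetilde{\mathbf z})$: $\mu=\rho(\widetilde{\mathbf M})\in(0,1)$ and $\widetilde{\mathbf w},\widetilde{\mathbf z}$ the positive left/right eigenvectors for $\mu$, normalised by $\langle\widetilde{\mathbf w},\mathbf 1\rangle=\langle\widetilde{\mathbf w},\widetilde{\mathbf z}\rangle=1$. $\mathbf M$ is micro-reversible if $\widetilde w_i\widetilde M_{ij}\widetilde z_j=\widetilde w_j\widetilde M_{ji}\widetilde z_i$ for all $i,j$. The $Q$-process kernel is $\mathbf K=\frac1\mu\operatorname{diag}(\widetilde{\mathbf w})^{-1}\widetilde{\mathbf M}^\dagger\operatorname{diag}(\widetilde{\mathbf w})$, which is irreducible, row-stochastic, with stationary distribution $\boldsymbol\pi=\widetilde{\mathbf w}\circ\widetilde{\mathbf z}$ and $\pi_iK_{ij}=\pi_jK_{ji}$. $\beta$ is the logarithmic mean: $\beta(x,y)=\frac{x-y}{\log x-\log y}$ for $x\ne y$, $\beta(x,x)=x$ (so $\beta(Q_i,Q_j)(\log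 Q_j-\log Q_i)=Q_j-Q_i$). *)

theory Defs
  imports "HOL-Analysis.Analysis"
begin

text \<open>Matrices are functions nat => nat => real, with indices in {0..<m}
  (an m x m matrix). Vectors are functions nat => real.\<close>

definition col_stochastic :: "nat \<Rightarrow> (nat \<Rightarrow> nat \<Rightarrow> real) \<Rightarrow> bool" where
  "col_stochastic m A \<longleftrightarrow> (\<forall>i<m. \<forall>j<m. 0 \<le> A i j) \<and> (\<forall>j<m. (\<Sum>i<m. A i j) = 1)"

fun mat_pow :: "nat \<Rightarrow> (nat \<Rightarrow> nat \<Rightarrow> real) \<Rightarrow> nat \<Rightarrow> nat \<Rightarrow> nat \<Rightarrow> real" where
  "mat_pow m A 0 = (\<lambda>i j. if i = j then 1 else 0)"
| "mat_pow m A (Suc p) = (\<lambda>i j. \<Sum>l<m. mat_pow m A p i l * A l j)"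

definition irreducible_mat :: "nat \<Rightarrow> (nat \<Rightarrow> nat \<Rightarrow> real) \<Rightarrow> bool" where
  "irreducible_mat m A \<longleftrightarrow> (\<forall>i<m. \<forall>j<m. \<exists>p>0. mat_pow m A p i j > 0)"

definition spec_rad :: "nat \<Rightarrow> (nat \<Rightarrow> nat \<Rightarrow> real) \<Rightarrow> real" where
  "spec_rad m A = Max {cmod lam | lam. \<exists>v :: nat \<Rightarrow> complex. (\<exists>i<m. v i \<noteq> 0) \<and>
      (\<forall>i<m. (\<Sum>j<m. complex_of_real (A i j) * v j) = lam * v i)}"

text \<open>(N+1,k)-admissibility of M, witnessed by the simultaneous permutation sigma of {0..N}:
  (M (sigma i) (sigma j)) has the block form [[Mt,0],[A,I]] with core Mt of size N+1-k.\<close>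
definition admissible_perm :: "nat \<Rightarrow> nat \<Rightarrow> (nat \<Rightarrow> nat \<Rightarrow> real) \<Rightarrow> (nat \<Rightarrow> nat) \<Rightarrow> bool" where
  "admissible_perm N k M \<sigma> \<longleftrightarrow>
     1 \<le> k \<and> k + 1 < N \<and> col_stochastic (N+1) M \<and> bij_betw \<sigma> {..N} {..N} \<and>
     (\<forall>i\<le>N. \<forall>j. N + 1 - k \<le> j \<and> j \<le> N \<longrightarrow> M (\<sigma> i) (\<sigma> j) = (if i = j then 1 else 0)) \<and>
     (\<forall>i. N + 1 - k \<le> i \<and> i \<le> N \<longrightarrow> (\<exists>j < N + 1 - k. M (\<sigma> i) (\<sigma> j) \<noteq> 0)) \<and>
     irreducible_mat (N + 1 - k) (\<lambda>i j. M (\<sigma> i) (\<sigma> j))"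

definition core :: "(nat \<Rightarrow> nat \<Rightarrow> real) \<Rightarrow> (nat \<Rightarrow> nat) \<Rightarrow> nat \<Rightarrow> nat \<Rightarrow> real" where
  "core M \<sigma> = (\<lambda>i j. M (\<sigma> i) (\<sigma> j))"

definition char_triple :: "nat \<Rightarrow> (nat \<Rightarrow> nat \<Rightarrow> real) \<Rightarrow> real \<Rightarrow> (nat \<Rightarrow> real) \<Rightarrow> (nat \<Rightarrow> real) \<Rightarrow> bool" where
  "char_triple m Mt \<mu> w z \<longleftrightarrow>
     \<mu> = spec_rad m Mt \<and> (\<forall>i<m. 0 < w i \<and> 0 < z i) \<and>
     (\<forall>j<m. (\<Sum>i<m. w i * Mt i j) = \<mu> * w j) \<and>
     (\<forall>i<m. (\<Sum>j<m. Mt i j * z j) = \<mu> * z i) \<and>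
     (\<Sum>i<m. w i) = 1 \<and> (\<Sum>i<m. w i * z i) = 1"

definition micro_reversible :: "nat \<Rightarrow> (nat \<Rightarrow> nat \<Rightarrow> real) \<Rightarrow> (nat \<Rightarrow> real) \<Rightarrow> (nat \<Rightarrow> real) \<Rightarrow> bool" where
  "micro_reversible m Mt w z \<longleftrightarrow> (\<forall>i<m. \<forall>j<m. w i * Mt i j * z j = w j * Mt j i * z i)"

definition Qkernel :: "(nat \<Rightarrow> nat \<Rightarrow> real) \<Rightarrow> real \<Rightarrow> (nat \<Rightarrow> real) \<Rightarrow> nat \<Rightarrow> nat \<Rightarrow> real" where
  "Qkernel Mt \<mu> w = (\<lambda>i j. Mt j i * w j / (\<mu> * w i))"

definition statdist :: "(nat \<Rightarrow> real) \<Rightarrow> (nat \<Rightarrow> real) \<Rightarrow> nat \<Rightarrow> real" where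
  "statdist w z = (\<lambda>i. w i * z i)"

definition logmean :: "real \<Rightarrow> real \<Rightarrow> real" where
  "logmean x y = (if x = y then x else (x - y) / (ln x - ln y))"

definition G_phi :: "(real \<Rightarrow> real) \<Rightarrow> nat \<Rightarrow> (nat \<Rightarrow> real) \<Rightarrow> (nat \<Rightarrow> real) \<Rightarrow> real" where
  "G_phi \<phi> m \<pi> Q = (\<Sum>i<m. \<phi> (Q i) * \<pi> i)"

definition is_Qsol :: "nat \<Rightarrow> (nat \<Rightarrow> nat \<Rightarrow> real) \<Rightarrow> (nat \<Rightarrow> real) \<Rightarrow> (real \<Rightarrow> nat \<Rightarrow> real) \<Rightarrow> bool" where
  "is_Qsol m K \<pi> Q \<longleftrightarrow>
     (\<forall>t\<ge>0. \<forall>i<m. ((\<lambda>s. Q s i) has_real_derivative ((\<Sum>j<m. K i j * Q t j) - Q t i)) (at t within {0..})) \<and>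
     (\<forall>t\<ge>0. (\<forall>i<m. 0 \<le> Q t i * \<pi> i) \<and> (\<Sum>i<m. Q t i * \<pi> i) = 1)"

definition dissip :: "(real \<Rightarrow> real) \<Rightarrow> nat \<Rightarrow> (nat \<Rightarrow> nat \<Rightarrow> real) \<Rightarrow> (nat \<Rightarrow> real) \<Rightarrow> (nat \<Rightarrow> real) \<Rightarrow> real" where
  "dissip \<phi> m K \<pi> Q = - (1/2) * (\<Sum>i<m. \<Sum>j<m. K i j * logmean (Q i) (Q j) *
       (deriv \<phi> (Q j) - deriv \<phi> (Q i)) * (ln (Q j) - ln (Q i)) * \<pi> i)"

end

theory Submission
  imports Defs
begin

text \<open>Detailed balance \<open>\<pi> i * K i j = \<pi> j * K j i\<close> turns the derivative
  \<open>\<Sum>i. \<phi>'(Q i) * ((K Q) i - Q i) * \<pi> i\<close> of \<open>G_phi\<close> along the flow into the Dirichlet form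
  \<open>-1/2 * \<Sum>i j. \<pi> i * K i j * (\<phi>'(Q j) - \<phi>'(Q i)) * (Q j - Q i)\<close>. Since
  \<open>logmean (Q i) (Q j) * (ln (Q j) - ln (Q i)) = Q j - Q i\<close> this is the stated dissipation, and it
  is nonpositive because \<open>\<phi>'\<close> is monotone. The logarithms make sense because irreducibility keeps
  every coordinate of \<open>Q t\<close> positive for \<open>t > 0\<close>. For strongly convex \<open>\<phi>\<close>, the normalisation
  \<open>\<Sum>i. Q i * \<pi> i = 1\<close> confines \<open>Q t\<close> to the box \<open>Q i \<le> 1 / \<pi> i\<close>, on which each Dirichlet-form
  term is at least \<open>c * (Q j - Q i)\<^sup>2\<close>; Jensen then compares the sum with the \<open>\<pi>\<close>-norm of
  \<open>(K - I) Q\<close>. Finally \<open>\<phi> x \<ge> x - 1\<close> gives \<open>G_phi \<ge> \<Sum>i. (Q i - 1) * \<pi> i = 0\<close>.\<close>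

lemma logmean_mult_ln_diff:
  assumes "0 < x" "0 < y"
  shows "logmean x y * (ln y - ln x) = y - x"
proof (cases "x = y")
  case False
  then have "ln x - ln y \<noteq> 0" using assms by simp
  then show ?thesis using False unfolding logmean_def by (simp add: field_simps)
qed (simp add: logmean_def)

lemma convex_on_deriv_increments_nonneg:
  fixes f :: "real \<Rightarrow> real"
  assumes conv: "convex_on S f" and "connected S"
    and "x \<in> interior S" "y \<in> interior S"
    and "f differentiable (at x)" "f differentiable (at y)"
  shows "0 \<le> (deriv f y - deriv f x) * (y - x)"
proof -
  have tangent: "f v - f u \<ge> deriv f u * (v - u)"
    if "u \<in> interior S" "v \<in> interior S" "f differentiable (at u)" for u v
  proof (rule convex_on_imp_above_tangent[OF conv \<open>connected S\<close> \<open>u \<in> interior S\<close>])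
    show "v \<in> S" using \<open>v \<in> interior S\<close> interior_subset by blast
    show "(f has_field_derivative deriv f u) (at u within S)"
      using \<open>f differentiable (at u)\<close> DERIV_deriv_iff_real_differentiable
        has_field_derivative_at_within by blast
  qed
  show ?thesis
    using tangent[of x y] tangent[of y x] assms by (simp add: algebra_simps)
qed

lemma DERIV_ge_imp_strongly_monotone:
  fixes g g' :: "real \<Rightarrow> real"
  assumes deriv: "\<And>u. min x y \<le> u \<Longrightarrow> u \<le> max x y \<Longrightarrow> (g has_real_derivative g' u) (at u)"
    and bound: "\<And>u. min x y \<le> u \<Longrightarrow> u \<le> max x y \<Longrightarrow> c \<le> g' u"
  shows "c * (y - x)\<^sup>2 \<le> (g y - g x) * (y - x)"
proof -
  have increasing: "c * (b - a)\<^sup>2 \<le> (g b - g a) * (b - a)"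
    if "a < b" "min x y = a" "max x y = b" for a b
  proof -
    have "\<And>u. a \<le> u \<Longrightarrow> u \<le> b \<Longrightarrow> (g has_real_derivative g' u) (at u)"
      using deriv that by simp
    then obtain u where u: "a < u" "u < b" "g b - g a = (b - a) * g' u"
      using MVT2[OF \<open>a < b\<close>] by blast
    have "c * (b - a)\<^sup>2 \<le> g' u * (b - a)\<^sup>2"
      using bound[of u] u that by (intro mult_right_mono) auto
    also have "\<dots> = (g b - g a) * (b - a)"
      using u(3) by (simp add: power2_eq_square)
    finally show ?thesis .
  qed
  consider "x < y" | "x = y" | "y < x" by linarith
  then show ?thesis
  proof cases
    case 3
    then show ?thesis
      using increasing[of y x] by (simp add: power2_commute algebra_simps)
  qed (use increasing[of x y] in auto)
qed

lemma mat_pow_nonneg: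
  assumes "\<And>i j. i < m \<Longrightarrow> j < m \<Longrightarrow> 0 \<le> A i j" "i < m" "j < m"
  shows "0 \<le> mat_pow m A p i j"
  using assms(3)
proof (induction p arbitrary: j)
  case (Suc p)
  then show ?case
    using assms(1,2) by (auto intro!: sum_nonneg mult_nonneg_nonneg)
qed simp

lemma mat_pow_pos_mono_support:
  assumes A_nonneg: "\<And>i j. i < m \<Longrightarrow> j < m \<Longrightarrow> 0 \<le> A i j"
    and B_nonneg: "\<And>i j. i < m \<Longrightarrow> j < m \<Longrightarrow> 0 \<le> B i j"
    and support: "\<And>i j. i < m \<Longrightarrow> j < m \<Longrightarrow> A i j \<noteq> 0 \<Longrightarrow> B i j \<noteq> 0"
    and "i < m" "j < m" "0 < mat_pow m A p i j"
  shows "0 < mat_pow m B p i j"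
  using assms(5,6)
proof (induction p arbitrary: j)
  case (Suc p)
  then have "(\<Sum>l<m. mat_pow m A p i l * A l j) \<noteq> 0" by simp
  then obtain l where l: "l < m" and "mat_pow m A p i l * A l j \<noteq> 0"
    using sum.not_neutral_contains_not_neutral by blast
  then have "mat_pow m A p i l \<noteq> 0" "A l j \<noteq> 0" by auto
  moreover have "0 \<le> mat_pow m A p i l"
    using mat_pow_nonneg[of m A] A_nonneg \<open>i < m\<close> l by blast
  ultimately have "0 < mat_pow m B p i l" "0 < B l j"
    using Suc.IH[OF l] support[OF l \<open>j < m\<close>] B_nonneg[OF l \<open>j < m\<close>] by linarith+
  then have "0 < mat_pow m B p i l * B l j" by simp
  also have "\<dots> \<le> (\<Sum>l<m. mat_pow m B p i l * B l j)"
    using mat_pow_nonneg[of m B] B_nonneg \<open>i < m\<close> \<open>j < m\<close> l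
    by (intro member_le_sum) auto
  finally show ?case by simp
qed simp

lemma irreducible_mat_mono_support:
  assumes "irreducible_mat m A"
    and "\<And>i j. i < m \<Longrightarrow> j < m \<Longrightarrow> 0 \<le> A i j" "\<And>i j. i < m \<Longrightarrow> j < m \<Longrightarrow> 0 \<le> B i j"
    and "\<And>i j. i < m \<Longrightarrow> j < m \<Longrightarrow> A i j \<noteq> 0 \<Longrightarrow> B i j \<noteq> 0"
  shows "irreducible_mat m B"
  unfolding irreducible_mat_def
proof (intro allI impI)
  fix i j assume ij: "i < m" "j < m"
  then obtain p where "p > 0" "0 < mat_pow m A p i j"
    using assms(1) unfolding irreducible_mat_def by blast
  moreover have "0 < mat_pow m B p i j"
    by (rule mat_pow_pos_mono_support[of m A B, OF assms(2-4) ij \<open>0 < mat_pow m A p i j\<close>])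
  ultimately show "\<exists>p>0. 0 < mat_pow m B p i j" by blast
qed

lemma mat_pow_forward_closed:
  assumes closed: "\<And>a b. a < m \<Longrightarrow> b < m \<Longrightarrow> A a b \<noteq> 0 \<Longrightarrow> a \<in> Z \<Longrightarrow> b \<in> Z"
    and "mat_pow m A p a b \<noteq> 0" "a < m" "b < m" "a \<in> Z"
  shows "b \<in> Z"
  using assms(2,4)
proof (induction p arbitrary: b)
  case 0
  then show ?case using \<open>a \<in> Z\<close> by (cases "a = b") auto
next
  case (Suc p)
  then have "(\<Sum>l<m. mat_pow m A p a l * A l b) \<noteq> 0" by simp
  then obtain l where l: "l < m" and "mat_pow m A p a l * A l b \<noteq> 0"
    using sum.not_neutral_contains_not_neutral by blast
  then have "mat_pow m A p a l \<noteq> 0" "A l b \<noteq> 0" by auto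
  then show ?case using Suc.IH[OF _ l] closed[OF l \<open>b < m\<close>] by blast
qed

lemma dissip_eq_Dirichlet_form:
  assumes "\<And>i. i < m \<Longrightarrow> 0 < Q i"
  shows "dissip \<phi> m K \<pi> Q
    = -(1/2) * (\<Sum>i<m. \<Sum>j<m. \<pi> i * K i j * ((deriv \<phi> (Q j) - deriv \<phi> (Q i)) * (Q j - Q i)))"
  unfolding dissip_def
proof (intro arg_cong[where f = "\<lambda>x. -(1/2) * x"] sum.cong refl)
  fix i j assume "i \<in> {..<m}" "j \<in> {..<m}"
  then have "logmean (Q i) (Q j) * (ln (Q j) - ln (Q i)) = Q j - Q i"
    using assms by (simp add: logmean_mult_ln_diff)
  moreover have "K i j * logmean (Q i) (Q j) * (deriv \<phi> (Q j) - deriv \<phi> (Q i)) * (ln (Q j) - ln (Q i)) * \<pi> i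
    = \<pi> i * K i j * ((deriv \<phi> (Q j) - deriv \<phi> (Q i)) * (logmean (Q i) (Q j) * (ln (Q j) - ln (Q i))))"
    by (simp only: mult_ac)
  ultimately show "K i j * logmean (Q i) (Q j) * (deriv \<phi> (Q j) - deriv \<phi> (Q i)) * (ln (Q j) - ln (Q i)) * \<pi> i
    = \<pi> i * K i j * ((deriv \<phi> (Q j) - deriv \<phi> (Q i)) * (Q j - Q i))"
    by simp
qed

lemma is_Qsol_has_derivative:
  assumes sol: "is_Qsol m K \<pi> Q" and "0 < t" "i < m"
  shows "((\<lambda>s. Q s i) has_real_derivative (\<Sum>j<m. K i j * Q t j) - Q t i) (at t)"
proof -
  have "((\<lambda>s. Q s i) has_real_derivative (\<Sum>j<m. K i j * Q t j) - Q t i) (at t within {0..})"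
    using assms unfolding is_Qsol_def by simp
  then have "((\<lambda>s. Q s i) has_real_derivative (\<Sum>j<m. K i j * Q t j) - Q t i) (at t within {0<..})"
    by (rule has_field_derivative_subset) auto
  then show ?thesis using \<open>0 < t\<close> at_within_open[of t "{0<..}"] by simp
qed

lemma is_Qsol_nonneg:
  assumes "is_Qsol m K \<pi> Q" "0 \<le> t" "i < m" "0 < \<pi> i"
  shows "0 \<le> Q t i"
proof -
  have "0 \<le> Q t i * \<pi> i" using assms unfolding is_Qsol_def by blast
  then show ?thesis using \<open>0 < \<pi> i\<close> by (simp add: zero_le_mult_iff)
qed

lemma is_Qsol_le:
  assumes sol: "is_Qsol m K \<pi> Q" and "0 \<le> t" "i < m" and pi_pos: "\<And>j. j < m \<Longrightarrow> 0 < \<pi> j"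
  shows "Q t i \<le> 1 / \<pi> i"
proof -
  have "Q t i * \<pi> i \<le> (\<Sum>j<m. Q t j * \<pi> j)"
    using sol \<open>0 \<le> t\<close> \<open>i < m\<close> unfolding is_Qsol_def by (intro member_le_sum) auto
  also have "\<dots> = 1" using sol \<open>0 \<le> t\<close> unfolding is_Qsol_def by blast
  finally show ?thesis using pi_pos[OF \<open>i < m\<close>] by (simp add: field_simps)
qed

text \<open>A vanishing coordinate of a solution stays zero backwards in time, because
  \<open>exp s * Q s i\<close> is nondecreasing: its derivative is \<open>exp s * (\<Sum>j. K i j * Q s j) \<ge> 0\<close>.\<close>

lemma is_Qsol_zero_backward:
  assumes sol: "is_Qsol m K \<pi> Q"
    and K_nonneg: "\<And>i j. i < m \<Longrightarrow> j < m \<Longrightarrow> 0 \<le> K i j"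
    and pi_pos: "\<And>i. i < m \<Longrightarrow> 0 < \<pi> i"
    and "i < m" "Q t i = 0" "0 < s" "s \<le> t"
  shows "Q s i = 0"
proof -
  let ?f = "\<lambda>x. exp x * Q x i"
  have f_deriv: "(?f has_real_derivative exp x * (\<Sum>j<m. K i j * Q x j)) (at x)" if "0 < x" for x
    using DERIV_mult[OF DERIV_exp is_Qsol_has_derivative[OF sol that \<open>i < m\<close>]]
    by (simp add: algebra_simps)
  have "?f s \<le> ?f t"
  proof (rule DERIV_nonneg_imp_increasing_open[OF \<open>s \<le> t\<close>])
    fix x assume "s < x" "x < t"
    then have "0 < x" using \<open>0 < s\<close> by linarith
    have "0 \<le> (\<Sum>j<m. K i j * Q x j)"
      using K_nonneg \<open>i < m\<close> is_Qsol_nonneg[OF sol _ _ pi_pos] \<open>0 < x\<close>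
      by (intro sum_nonneg) simp
    then show "\<exists>y. (?f has_real_derivative y) (at x) \<and> 0 \<le> y"
      using f_deriv[OF \<open>0 < x\<close>] by auto
  next
    show "continuous_on {s..t} ?f"
    proof (intro continuous_at_imp_continuous_on ballI)
      fix x assume "x \<in> {s..t}"
      then show "isCont ?f x" using f_deriv[of x] DERIV_isCont \<open>0 < s\<close> by auto
    qed
  qed
  then have "Q s i \<le> 0" using \<open>Q t i = 0\<close> by (simp add: mult_le_0_iff)
  moreover have "0 \<le> Q s i"
    using is_Qsol_nonneg[OF sol _ \<open>i < m\<close> pi_pos[OF \<open>i < m\<close>]] \<open>0 < s\<close> by simp
  ultimately show ?thesis by simp
qed

text \<open>If coordinate \<open>j\<close> vanishes on an interval, so does its derivative
  \<open>\<Sum>l. K j l * Q s l\<close>, a sum of nonnegative terms.\<close>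

lemma is_Qsol_zero_spreads:
  assumes sol: "is_Qsol m K \<pi> Q"
    and K_nonneg: "\<And>i j. i < m \<Longrightarrow> j < m \<Longrightarrow> 0 \<le> K i j"
    and pi_pos: "\<And>i. i < m \<Longrightarrow> 0 < \<pi> i"
    and "j < m" "l < m" "K j l \<noteq> 0"
    and zero: "\<And>s. s \<in> {0<..<t} \<Longrightarrow> Q s j = 0" and s: "s \<in> {0<..<t}"
  shows "Q s l = 0"
proof -
  have "((\<lambda>s. 0) has_real_derivative (\<Sum>l<m. K j l * Q s l) - Q s j) (at s)"
    by (rule has_field_derivative_transform_within_open
        [OF is_Qsol_has_derivative[OF sol _ \<open>j < m\<close>], of s "{0<..<t}"])
      (use s zero in auto)
  then have "(\<Sum>l<m. K j l * Q s l) = 0"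
    using DERIV_unique[OF _ DERIV_const] zero[OF s] by fastforce
  moreover have "\<forall>l\<in>{..<m}. 0 \<le> K j l * Q s l"
    using K_nonneg \<open>j < m\<close> is_Qsol_nonneg[OF sol _ _ pi_pos] s by simp
  ultimately have "K j l * Q s l = 0"
    using sum_nonneg_eq_0_iff[of "{..<m}" "\<lambda>l. K j l * Q s l"] \<open>l < m\<close> by simp
  then show ?thesis using \<open>K j l \<noteq> 0\<close> by simp
qed

lemma G_phi_has_derivative:
  assumes sol: "is_Qsol m K \<pi> Q" and "0 < t" and Q_pos: "\<And>i. i < m \<Longrightarrow> 0 < Q t i"
    and diff: "\<forall>x>0. \<phi> differentiable (at x)"
  shows "((\<lambda>s. G_phi \<phi> m \<pi> (Q s)) has_real_derivative
           (\<Sum>i<m. deriv \<phi> (Q t i) * ((\<Sum>j<m. K i j * Q t j) - Q t i) * \<pi> i)) (at t)"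
  unfolding G_phi_def
proof (rule DERIV_sum)
  fix i assume "i \<in> {..<m}"
  then have "(\<phi> has_real_derivative deriv \<phi> (Q t i)) (at (Q t i))"
    using diff Q_pos DERIV_deriv_iff_real_differentiable by simp
  from DERIV_chain2[OF this is_Qsol_has_derivative[OF sol \<open>0 < t\<close>]] \<open>i \<in> {..<m}\<close>
  show "((\<lambda>s. \<phi> (Q s i) * \<pi> i) has_real_derivative
          deriv \<phi> (Q t i) * ((\<Sum>j<m. K i j * Q t j) - Q t i) * \<pi> i) (at t)"
    by (auto intro: DERIV_cmult_right)
qed

locale reversible_kernel =
  fixes m :: nat and K :: "nat \<Rightarrow> nat \<Rightarrow> real" and \<pi> :: "nat \<Rightarrow> real"
  assumes K_nonneg: "\<And>i j. i < m \<Longrightarrow> j < m \<Longrightarrow> 0 \<le> K i j"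
    and K_row_sum: "\<And>i. i < m \<Longrightarrow> (\<Sum>j<m. K i j) = 1"
    and pi_pos: "\<And>i. i < m \<Longrightarrow> 0 < \<pi> i"
    and pi_sum: "(\<Sum>i<m. \<pi> i) = 1"
    and detailed_balance: "\<And>i j. i < m \<Longrightarrow> j < m \<Longrightarrow> \<pi> i * K i j = \<pi> j * K j i"
begin

lemma generator_eq_sum_increments:
  assumes "i < m"
  shows "(\<Sum>j<m. K i j * Q j) - Q i = (\<Sum>j<m. K i j * (Q j - Q i))"
proof -
  have "(\<Sum>j<m. K i j * Q j) - Q i = (\<Sum>j<m. K i j * Q j) - (\<Sum>j<m. K i j) * Q i"
    using K_row_sum[OF assms] by simp
  also have "\<dots> = (\<Sum>j<m. K i j * (Q j - Q i))"
    by (simp add: sum_distrib_right sum_subtractf right_diff_distrib)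
  finally show ?thesis .
qed

text \<open>Detailed balance makes the double sum symmetric under \<open>i \<leftrightarrow> j\<close>, so it equals half the
  sum of itself and its swapped copy.\<close>

lemma sum_mult_generator_eq_Dirichlet_form:
  "(\<Sum>i<m. d i * ((\<Sum>j<m. K i j * Q j) - Q i) * \<pi> i)
     = -(1/2) * (\<Sum>i<m. \<Sum>j<m. \<pi> i * K i j * ((d j - d i) * (Q j - Q i)))"
proof -
  define T where "T = (\<Sum>i<m. \<Sum>j<m. \<pi> i * K i j * (d i * (Q j - Q i)))"
  have "d i * ((\<Sum>j<m. K i j * Q j) - Q i) * \<pi> i
      = (\<Sum>j<m. \<pi> i * K i j * (d i * (Q j - Q i)))" if "i < m" for i
    unfolding generator_eq_sum_increments[OF that]
    by (simp add: sum_distrib_left sum_distrib_right mult_ac)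
  then have lhs: "(\<Sum>i<m. d i * ((\<Sum>j<m. K i j * Q j) - Q i) * \<pi> i) = T"
    unfolding T_def by (intro sum.cong refl) simp
  have "T = (\<Sum>j<m. \<Sum>i<m. \<pi> j * K j i * (d i * (Q j - Q i)))"
    unfolding T_def by (subst sum.swap) (simp add: detailed_balance)
  then have "T + T = - (\<Sum>i<m. \<Sum>j<m. \<pi> i * K i j * ((d j - d i) * (Q j - Q i)))"
    by (subst (2) T_def) (simp add: sum.distrib[symmetric] sum_negf[symmetric] algebra_simps)
  with lhs show ?thesis by simp
qed

lemma generator_square_le:
  assumes "i < m"
  shows "((\<Sum>j<m. K i j * Q j) - Q i)\<^sup>2 \<le> (\<Sum>j<m. K i j * (Q j - Q i)\<^sup>2)"
proof -
  have "{..<m} \<noteq> {}" using assms by auto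
  then show ?thesis
    unfolding generator_eq_sum_increments[OF assms]
    using convex_on_sum[OF _ _ convex_power2, of "{..<m}" "K i" "\<lambda>j. Q j - Q i"]
      K_row_sum[OF assms] K_nonneg[OF assms] by simp
qed

lemma dissip_nonpos:
  assumes "convex_on {0..} \<phi>" "\<forall>x>0. \<phi> differentiable (at x)" "\<And>i. i < m \<Longrightarrow> 0 < Q i"
  shows "dissip \<phi> m K \<pi> Q \<le> 0"
proof -
  have "0 \<le> \<pi> i * K i j * ((deriv \<phi> (Q j) - deriv \<phi> (Q i)) * (Q j - Q i))"
    if "i < m" "j < m" for i j
    using assms that pi_pos[of i] K_nonneg[of i j]
    by (intro mult_nonneg_nonneg convex_on_deriv_increments_nonneg[of "{0..}"])
      (auto simp: is_interval_connected)
  then have "0 \<le> (\<Sum>i<m. \<Sum>j<m. \<pi> i * K i j * ((deriv \<phi> (Q j) - deriv \<phi> (Q i)) * (Q j - Q i)))"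
    by (intro sum_nonneg) simp
  then show ?thesis
    using dissip_eq_Dirichlet_form[of m Q \<phi> K \<pi>, OF assms(3)] by linarith
qed

text \<open>Strong convexity bounds each Dirichlet-form term below by \<open>c * (Q j - Q i)\<^sup>2\<close>, and by
  Jensen the squared generator is at most the resulting sum.\<close>

lemma dissip_le_generator_norm:
  assumes "\<forall>x>0. (deriv \<phi> has_real_derivative \<phi>2 x) (at x)"
    and "0 \<le> c" "\<forall>x\<in>{0<..B}. c \<le> \<phi>2 x"
    and Q_bounds: "\<And>i. i < m \<Longrightarrow> 0 < Q i \<and> Q i \<le> B"
  shows "dissip \<phi> m K \<pi> Q \<le> -(c/2) * (\<Sum>i<m. ((\<Sum>j<m. K i j * Q j) - Q i)\<^sup>2 * \<pi> i)"
proof -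
  have "(\<Sum>i<m. ((\<Sum>j<m. K i j * Q j) - Q i)\<^sup>2 * \<pi> i)
      \<le> (\<Sum>i<m. \<Sum>j<m. \<pi> i * K i j * (Q j - Q i)\<^sup>2)" (is "?V \<le> ?S2")
  proof (intro sum_mono)
    fix i assume "i \<in> {..<m}"
    then have "((\<Sum>j<m. K i j * Q j) - Q i)\<^sup>2 * \<pi> i \<le> (\<Sum>j<m. K i j * (Q j - Q i)\<^sup>2) * \<pi> i"
      using generator_square_le pi_pos by (intro mult_right_mono) (auto intro: less_imp_le)
    then show "((\<Sum>j<m. K i j * Q j) - Q i)\<^sup>2 * \<pi> i \<le> (\<Sum>j<m. \<pi> i * K i j * (Q j - Q i)\<^sup>2)"
      by (simp add: sum_distrib_left mult_ac)
  qed
  have "c * ?S2 \<le> (\<Sum>i<m. \<Sum>j<m. \<pi> i * K i j * ((deriv \<phi> (Q j) - deriv \<phi> (Q i)) * (Q j - Q i)))"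
    (is "_ \<le> ?S")
    unfolding sum_distrib_left
  proof (intro sum_mono)
    fix i j assume "i \<in> {..<m}" "j \<in> {..<m}"
    then have "u \<in> {0<..B}" if "min (Q i) (Q j) \<le> u" "u \<le> max (Q i) (Q j)" for u
      using Q_bounds[of i] Q_bounds[of j] that by auto
    then have "c * (Q j - Q i)\<^sup>2 \<le> (deriv \<phi> (Q j) - deriv \<phi> (Q i)) * (Q j - Q i)"
      using assms(1,3) by (intro DERIV_ge_imp_strongly_monotone[where g' = \<phi>2]) auto
    then have "\<pi> i * K i j * (c * (Q j - Q i)\<^sup>2)
        \<le> \<pi> i * K i j * ((deriv \<phi> (Q j) - deriv \<phi> (Q i)) * (Q j - Q i))"
      using \<open>i \<in> {..<m}\<close> \<open>j \<in> {..<m}\<close> pi_pos[of i] K_nonneg[of i j]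
      by (intro mult_left_mono) auto
    then show "c * (\<pi> i * K i j * (Q j - Q i)\<^sup>2)
        \<le> \<pi> i * K i j * ((deriv \<phi> (Q j) - deriv \<phi> (Q i)) * (Q j - Q i))"
      by (simp add: mult_ac)
  qed
  moreover have "dissip \<phi> m K \<pi> Q = -(1/2) * ?S"
    using Q_bounds by (simp add: dissip_eq_Dirichlet_form)
  ultimately show ?thesis
    using mult_left_mono[OF \<open>?V \<le> ?S2\<close> \<open>0 \<le> c\<close>] by simp
qed

lemma G_phi_nonneg:
  assumes "\<forall>x\<ge>0. x - 1 \<le> \<phi> x" "\<And>i. i < m \<Longrightarrow> 0 \<le> Q i" "(\<Sum>i<m. Q i * \<pi> i) = 1"
  shows "0 \<le> G_phi \<phi> m \<pi> Q"
proof -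
  have "0 = (\<Sum>i<m. (Q i - 1) * \<pi> i)"
    using assms(3) pi_sum by (simp add: left_diff_distrib sum_subtractf)
  also have "\<dots> \<le> G_phi \<phi> m \<pi> Q"
    unfolding G_phi_def using assms pi_pos by (intro sum_mono mult_right_mono) (auto intro: less_imp_le)
  finally show ?thesis .
qed

end

locale irreducible_reversible_kernel = reversible_kernel +
  assumes irreducible: "irreducible_mat m K"
begin

text \<open>If some coordinate of a solution vanished at time \<open>t\<close>, it would vanish on \<open>(0, t)\<close>;
  the coordinates vanishing on \<open>(0, t)\<close> are closed under the edges of \<open>K\<close>, so by
  irreducibility all would vanish, contradicting \<open>\<Sum>i. Q s i * \<pi> i = 1\<close>.\<close>

lemma is_Qsol_pos:
  assumes sol: "is_Qsol m K \<pi> Q" and "0 < t" "i < m"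
  shows "0 < Q t i"
proof (rule ccontr)
  assume "\<not> 0 < Q t i"
  then have "Q t i = 0"
    using is_Qsol_nonneg[OF sol less_imp_le[OF \<open>0 < t\<close>] \<open>i < m\<close> pi_pos[OF \<open>i < m\<close>]]
    by simp
  define Z where "Z = {j. \<forall>s\<in>{0<..<t}. Q s j = 0}"
  have "i \<in> Z"
    using is_Qsol_zero_backward[OF sol K_nonneg pi_pos \<open>i < m\<close> \<open>Q t i = 0\<close>]
    unfolding Z_def by simp
  have closed: "b \<in> Z" if "a < m" "b < m" "K a b \<noteq> 0" "a \<in> Z" for a b
    using is_Qsol_zero_spreads[OF sol K_nonneg pi_pos that(1-3)] that(4)
    unfolding Z_def by blast
  have "j \<in> Z" if "j < m" for j
  proof -
    obtain p where "0 < mat_pow m K p i j"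
      using irreducible \<open>i < m\<close> \<open>j < m\<close> unfolding irreducible_mat_def by blast
    then show ?thesis
      using mat_pow_forward_closed[of m K Z p i j, OF closed _ \<open>i < m\<close> \<open>j < m\<close> \<open>i \<in> Z\<close>] by simp
  qed
  then have "(\<Sum>j<m. Q (t/2) j * \<pi> j) = 0"
    unfolding Z_def using \<open>0 < t\<close> by simp
  moreover have "(\<Sum>j<m. Q (t/2) j * \<pi> j) = 1"
    using sol \<open>0 < t\<close> unfolding is_Qsol_def by simp
  ultimately show False by simp
qed

lemma G_phi_has_derivative_dissip:
  assumes "is_Qsol m K \<pi> Q" "0 < t" "\<forall>x>0. \<phi> differentiable (at x)"
  shows "((\<lambda>s. G_phi \<phi> m \<pi> (Q s)) has_real_derivative dissip \<phi> m K \<pi> (Q t)) (at t)"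
proof -
  have pos: "\<And>i. i < m \<Longrightarrow> 0 < Q t i" by (rule is_Qsol_pos[OF assms(1,2)])
  have "((\<lambda>s. G_phi \<phi> m \<pi> (Q s)) has_real_derivative
           (\<Sum>i<m. deriv \<phi> (Q t i) * ((\<Sum>j<m. K i j * Q t j) - Q t i) * \<pi> i)) (at t)"
    by (rule G_phi_has_derivative[OF assms(1,2) pos assms(3)])
  also have "(\<Sum>i<m. deriv \<phi> (Q t i) * ((\<Sum>j<m. K i j * Q t j) - Q t i) * \<pi> i) = dissip \<phi> m K \<pi> (Q t)"
    unfolding sum_mult_generator_eq_Dirichlet_form by (rule dissip_eq_Dirichlet_form[symmetric, OF pos])
  finally show ?thesis .
qed

lemma dissip_le_generator_norm_uniform:
  assumes "\<forall>x>0. (deriv \<phi> has_real_derivative \<phi>2 x) (at x)"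
    and "\<forall>B>0. \<exists>c>0. \<forall>x\<in>{0<..B}. c \<le> \<phi>2 x"
  obtains C where "0 < C"
    "\<And>Q t. is_Qsol m K \<pi> Q \<Longrightarrow> 0 < t \<Longrightarrow>
       dissip \<phi> m K \<pi> (Q t) \<le> -C * (\<Sum>i<m. ((\<Sum>j<m. K i j * Q t j) - Q t i)\<^sup>2 * \<pi> i)"
proof -
  define B where "B = 1 + (\<Sum>i<m. 1 / \<pi> i)"
    \<comment> \<open>bounds every \<open>Q t i \<le> 1 / \<pi> i\<close>; the summand 1 keeps it positive when \<open>m = 0\<close>\<close>
  have "0 \<le> (\<Sum>i<m. 1 / \<pi> i)"
    using pi_pos by (intro sum_nonneg) (simp add: less_imp_le)
  then have "0 < B" unfolding B_def by simp
  then obtain c where "0 < c" and c: "\<forall>x\<in>{0<..B}. c \<le> \<phi>2 x"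
    using assms(2) by blast
  have Q_bounds: "0 < Q t i \<and> Q t i \<le> B" if "is_Qsol m K \<pi> Q" "0 < t" "i < m" for Q t i
  proof -
    have "Q t i \<le> 1 / \<pi> i"
      using is_Qsol_le[OF that(1) _ that(3) pi_pos] \<open>0 < t\<close> by simp
    also have "\<dots> \<le> (\<Sum>j<m. 1 / \<pi> j)"
      using pi_pos \<open>i < m\<close> by (intro member_le_sum) (auto intro: less_imp_le)
    finally show ?thesis
      using is_Qsol_pos[OF that] unfolding B_def by simp
  qed
  show ?thesis
  proof (rule that)
    show "0 < c / 2" using \<open>0 < c\<close> by simp
    fix Q :: "real \<Rightarrow> nat \<Rightarrow> real" and t :: real
    assume "is_Qsol m K \<pi> Q" "0 < t"
    then show "dissip \<phi> m K \<pi> (Q t) \<le> -(c / 2) * (\<Sum>i<m. ((\<Sum>j<m. K i j * Q t j) - Q t i)\<^sup>2 * \<pi> i)"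
      using dissip_le_generator_norm[OF assms(1) _ c] \<open>0 < c\<close> Q_bounds by simp
  qed
qed

end

lemma char_triple_eigenvalue_pos:
  assumes triple: "char_triple m Mt \<mu> w z" and irr: "irreducible_mat m Mt" and "0 < m"
    and Mt_nonneg: "\<And>i j. i < m \<Longrightarrow> j < m \<Longrightarrow> 0 \<le> Mt i j"
  shows "0 < \<mu>"
proof (rule ccontr)
  assume "\<not> 0 < \<mu>"
  have w_pos: "\<And>i. i < m \<Longrightarrow> 0 < w i"
    and w_left: "\<And>j. j < m \<Longrightarrow> (\<Sum>i<m. w i * Mt i j) = \<mu> * w j"
    using triple unfolding char_triple_def by simp_all
  have Mt_zero: "Mt i j = 0" if "i < m" "j < m" for i j
  proof -
    have nonneg: "\<And>l. l \<in> {..<m} \<Longrightarrow> 0 \<le> w l * Mt l j"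
      using w_pos Mt_nonneg \<open>j < m\<close> by (simp add: less_imp_le)
    have "(\<Sum>l<m. w l * Mt l j) \<le> 0"
      using w_left[OF \<open>j < m\<close>] \<open>\<not> 0 < \<mu>\<close> w_pos[OF \<open>j < m\<close>]
      by (simp add: mult_nonpos_nonneg)
    moreover have "0 \<le> (\<Sum>l<m. w l * Mt l j)" using nonneg by (rule sum_nonneg)
    ultimately have "(\<Sum>l<m. w l * Mt l j) = 0" by linarith
    then have "w i * Mt i j = 0"
      using sum_nonneg_eq_0_iff[of "{..<m}", OF _ nonneg] \<open>i < m\<close> by simp
    then show ?thesis using w_pos[OF \<open>i < m\<close>] by simp
  qed
  obtain p where "0 < p" "0 < mat_pow m Mt p 0 0"
    using irr \<open>0 < m\<close> unfolding irreducible_mat_def by blast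
  then obtain q where "0 < mat_pow m Mt (Suc q) 0 0"
    using gr0_implies_Suc by blast
  moreover have "mat_pow m Mt (Suc q) 0 0 = 0"
    using Mt_zero \<open>0 < m\<close> by simp
  ultimately show False by simp
qed

lemma Qkernel_irreducible_reversible:
  assumes triple: "char_triple m Mt \<mu> w z" and mrev: "micro_reversible m Mt w z"
    and irr: "irreducible_mat m Mt" and "0 < m"
    and Mt_nonneg: "\<And>i j. i < m \<Longrightarrow> j < m \<Longrightarrow> 0 \<le> Mt i j"
  shows "irreducible_reversible_kernel m (Qkernel Mt \<mu> w) (statdist w z)"
proof -
  have "0 < \<mu>" by (rule char_triple_eigenvalue_pos[OF triple irr \<open>0 < m\<close> Mt_nonneg])
  have w_pos: "\<And>i. i < m \<Longrightarrow> 0 < w i" and z_pos: "\<And>i. i < m \<Longrightarrow> 0 < z i"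
    and w_left: "\<And>j. j < m \<Longrightarrow> (\<Sum>i<m. w i * Mt i j) = \<mu> * w j"
    and wz_sum: "(\<Sum>i<m. w i * z i) = 1"
    using triple unfolding char_triple_def by simp_all
  have mr: "w i * Mt i j * z j = w j * Mt j i * z i" if "i < m" "j < m" for i j
    using mrev that unfolding micro_reversible_def by blast
  have K_nonneg: "0 \<le> Qkernel Mt \<mu> w i j" if "i < m" "j < m" for i j
    using Mt_nonneg[OF that(2,1)] w_pos[OF that(1)] w_pos[OF that(2)] \<open>0 < \<mu>\<close>
    unfolding Qkernel_def by simp
  have pi_K: "statdist w z i * Qkernel Mt \<mu> w i j = z i * (w j * Mt j i) / \<mu>" if "i < m" for i j
    using w_pos[OF that] unfolding statdist_def Qkernel_def by (simp add: divide_simps)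
  show ?thesis
  proof unfold_locales
    fix i j assume "i < m" "j < m"
    show "0 \<le> Qkernel Mt \<mu> w i j" by (rule K_nonneg[OF \<open>i < m\<close> \<open>j < m\<close>])
    show "statdist w z i * Qkernel Mt \<mu> w i j = statdist w z j * Qkernel Mt \<mu> w j i"
      using pi_K[OF \<open>i < m\<close>, of j] pi_K[OF \<open>j < m\<close>, of i] mr[OF \<open>i < m\<close> \<open>j < m\<close>]
      by (simp add: mult_ac)
  next
    fix i assume "i < m"
    show "(\<Sum>j<m. Qkernel Mt \<mu> w i j) = 1"
      using w_left[OF \<open>i < m\<close>] w_pos[OF \<open>i < m\<close>] \<open>0 < \<mu>\<close>
      unfolding Qkernel_def by (simp add: sum_divide_distrib[symmetric] mult.commute)
    show "0 < statdist w z i"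
      using w_pos[OF \<open>i < m\<close>] z_pos[OF \<open>i < m\<close>] unfolding statdist_def by simp
  next
    show "(\<Sum>i<m. statdist w z i) = 1" using wz_sum unfolding statdist_def .
  next
    have support: "Qkernel Mt \<mu> w i j \<noteq> 0" if "i < m" "j < m" "Mt i j \<noteq> 0" for i j
    proof -
      have "w i * Mt i j * z j \<noteq> 0"
        using that(3) w_pos[OF that(1)] z_pos[OF that(2)] by simp
      then have "Mt j i \<noteq> 0" using mr[OF that(1,2)] by auto
      then show ?thesis
        using w_pos[OF that(1)] w_pos[OF that(2)] \<open>0 < \<mu>\<close> unfolding Qkernel_def by simp
    qed
    from irr Mt_nonneg K_nonneg support show "irreducible_mat m (Qkernel Mt \<mu> w)"
      by (rule irreducible_mat_mono_support)
  qed
qed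

lemma admissible_perm_core:
  assumes "admissible_perm N k M \<sigma>"
  shows "irreducible_mat (N + 1 - k) (core M \<sigma>)" "0 < N + 1 - k"
    and "\<And>i j. i < N + 1 - k \<Longrightarrow> j < N + 1 - k \<Longrightarrow> 0 \<le> core M \<sigma> i j"
proof -
  have "k + 1 < N" and M: "col_stochastic (N + 1) M" and \<sigma>: "bij_betw \<sigma> {..N} {..N}"
    and irr: "irreducible_mat (N + 1 - k) (\<lambda>i j. M (\<sigma> i) (\<sigma> j))"
    using assms unfolding admissible_perm_def by simp_all
  show "irreducible_mat (N + 1 - k) (core M \<sigma>)" using irr unfolding core_def .
  show "0 < N + 1 - k" using \<open>k + 1 < N\<close> by linarith
  fix i j assume "i < N + 1 - k" "j < N + 1 - k"
  then have "\<sigma> i \<in> {..N}" "\<sigma> j \<in> {..N}"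
    using bij_betw_apply[OF \<sigma>] by simp_all
  then show "0 \<le> core M \<sigma> i j"
    using M unfolding col_stochastic_def core_def by simp
qed

theorem lemma5:
  fixes N k :: nat and M :: "nat \<Rightarrow> nat \<Rightarrow> real" and \<sigma> :: "nat \<Rightarrow> nat"
    and \<mu> :: real and w z :: "nat \<Rightarrow> real"
    and \<phi> \<phi>2 :: "real \<Rightarrow> real"
  assumes adm: "admissible_perm N k M \<sigma>"
    and triple: "char_triple (N + 1 - k) (core M \<sigma>) \<mu> w z"
    and mrev: "micro_reversible (N + 1 - k) (core M \<sigma>) w z"
    and conv: "convex_on {0..} \<phi>"
    and diff: "\<forall>x>0. \<phi> differentiable (at x)"
  shows
   "(\<forall>Q. is_Qsol (N + 1 - k) (Qkernel (core M \<sigma>) \<mu> w) (statdist w z) Q \<longrightarrow>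
      (\<forall>t>0. ((\<lambda>s. G_phi \<phi> (N + 1 - k) (statdist w z) (Q s)) has_real_derivative
                 dissip \<phi> (N + 1 - k) (Qkernel (core M \<sigma>) \<mu> w) (statdist w z) (Q t)) (at t)
             \<and> dissip \<phi> (N + 1 - k) (Qkernel (core M \<sigma>) \<mu> w) (statdist w z) (Q t) \<le> 0))
    \<and>
    ((\<forall>x>0. (deriv \<phi> has_real_derivative \<phi>2 x) (at x)) \<and>
     (\<forall>B>0. \<exists>c>0. \<forall>x\<in>{0<..B}. c \<le> \<phi>2 x) \<longrightarrow>
     (\<exists>C>0. \<forall>Q. is_Qsol (N + 1 - k) (Qkernel (core M \<sigma>) \<mu> w) (statdist w z) Q \<longrightarrow>
        (\<forall>t>0. dissip \<phi> (N + 1 - k) (Qkernel (core M \<sigma>) \<mu> w) (statdist w z) (Q t)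
               \<le> - C * (\<Sum>i<N + 1 - k. ((\<Sum>j<N + 1 - k. Qkernel (core M \<sigma>) \<mu> w i j * Q t j) - Q t i)\<^sup>2
                                        * statdist w z i)
             \<and> - C * (\<Sum>i<N + 1 - k. ((\<Sum>j<N + 1 - k. Qkernel (core M \<sigma>) \<mu> w i j * Q t j) - Q t i)\<^sup>2
                                        * statdist w z i) \<le> 0)))
    \<and>
    ((\<forall>x\<ge>0. x - 1 \<le> \<phi> x) \<longrightarrow>
     (\<forall>Q. is_Qsol (N + 1 - k) (Qkernel (core M \<sigma>) \<mu> w) (statdist w z) Q \<longrightarrow>
        (\<forall>t\<ge>0. 0 \<le> G_phi \<phi> (N + 1 - k) (statdist w z) (Q t))))"
proof -
  let ?m = "N + 1 - k" and ?K = "Qkernel (core M \<sigma>) \<mu> w" and ?\<pi> = "statdist w z"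
  have "irreducible_reversible_kernel ?m ?K ?\<pi>"
    using triple mrev admissible_perm_core[OF adm] by (rule Qkernel_irreducible_reversible)
  then interpret irreducible_reversible_kernel ?m ?K ?\<pi> .
  have V_nonneg: "0 \<le> (\<Sum>i<?m. (v i)\<^sup>2 * ?\<pi> i)" for v
    using pi_pos by (intro sum_nonneg) (simp add: less_imp_le)
  show ?thesis
  proof (intro conjI impI allI)
    fix Q and t :: real assume sol: "is_Qsol ?m ?K ?\<pi> Q" and "0 < t"
    show "((\<lambda>s. G_phi \<phi> ?m ?\<pi> (Q s)) has_real_derivative dissip \<phi> ?m ?K ?\<pi> (Q t)) (at t)"
      by (rule G_phi_has_derivative_dissip[OF sol \<open>0 < t\<close> diff])
    show "dissip \<phi> ?m ?K ?\<pi> (Q t) \<le> 0"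
      using is_Qsol_pos[OF sol \<open>0 < t\<close>] by (rule dissip_nonpos[OF conv diff])
  next
    let ?V = "\<lambda>Q t. (\<Sum>i<?m. ((\<Sum>j<?m. ?K i j * Q t j) - Q t i)\<^sup>2 * ?\<pi> i)"
    assume "(\<forall>x>0. (deriv \<phi> has_real_derivative \<phi>2 x) (at x)) \<and> (\<forall>B>0. \<exists>c>0. \<forall>x\<in>{0<..B}. c \<le> \<phi>2 x)"
    then obtain C where "0 < C" and "\<And>Q t. is_Qsol ?m ?K ?\<pi> Q \<Longrightarrow> 0 < t \<Longrightarrow>
        dissip \<phi> ?m ?K ?\<pi> (Q t) \<le> -C * ?V Q t"
      using dissip_le_generator_norm_uniform by blast
    with V_nonneg show "\<exists>C>0. \<forall>Q. is_Qsol ?m ?K ?\<pi> Q \<longrightarrow>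
        (\<forall>t>0. dissip \<phi> ?m ?K ?\<pi> (Q t) \<le> -C * ?V Q t \<and> -C * ?V Q t \<le> 0)"
      by (intro exI[of _ C]) (simp add: mult_nonneg_nonneg)
  next
    fix Q and t :: real
    assume "\<forall>x\<ge>0. x - 1 \<le> \<phi> x" and sol: "is_Qsol ?m ?K ?\<pi> Q" and "0 \<le> t"
    then show "0 \<le> G_phi \<phi> ?m ?\<pi> (Q t)"
      using is_Qsol_nonneg[OF sol \<open>0 \<le> t\<close> _ pi_pos] unfolding is_Qsol_def
      by (intro G_phi_nonneg) auto
  qed
qed

end
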